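(* Let $A=(Q,R,F_A)$ be an RNNA, regarded as the coalgebra $c\colon Q\to\mathcal{P}_{\mathsf{ufs}}(1+\mathbb{A}\times Q+[\mathbb{A}]Q)$ with $c(q)=\{*:q\in F_A\}\cup\{(a,q'):q\xrightarrow{a}q'\}\cup\{\langle a\rangle q': q\xrightarrow{\mathord{|}a}q'\}$. Let $\mathsf{tr}_c\colon Q\to\mathcal{P}_{\mathsf{ufs}}(\overline{\mathbb{A}}^*/{=_\alpha})$ be the unique morphism in $\mathrm{Kl}(\mathcal{P}_{\mathsf{ufs}})$ from $(Q,c)$ to the terminal $\overline{F}$-coalgebra $(\overline{\mathbb{A}}^*/{=_\alpha},J\iota^{-1})$, i.e. the unique equivariant map with $J\iota^{-1}\bullet\mathsf{tr}_c=\overline{F}\mathsf{tr}_c\bullet c$. Then for every state $q\in Q$, $\mathsf{tr}_c(q)$ is the bar language accepted by $q$.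
   Context: Fix a countably infinite set $\mathbb{A}$ of names; $\mathsf{Nom}$ is the category of nominal sets and equivariant maps; $\mathrm{supp}(x)$ is the least finite support, $a\#x$ means $a\notin\mathrm{supp}(x)$. $[\mathbb{A}]X=(\mathbb{A}\times X)/\sim$ with $(a,x)\sim(b,y)$ iff $(a\,c)\cdot x=(b\,c)\cdot y$ for fresh $c$; classes $\langle a\rangle x$. $\mathcal{P}_{\mathsf{ufs}}X$ is the set of uniformly finitely supported subsets ($\bigcup_{x\in A}\mathrm{supp}(x)$ finite), a monad with unit $x\mapsto\{x\}$ and multiplication union; $\mathrm{Kl}(\mathcal{P}_{\mathsf{ufs}})$ has equivariant maps $X\to\mathcal{P}_{\mathsf{ufs}}Y$ as morphisms, composed by $g\bullet f(x)=\bigcup_{y\in f(x)}g(y)$, and $Jf(x)=\{f(x)\}$. $FX=1+\mathbb{A}\times X+[\mathbb{A}]X$ with $1=\{*\}$, and $\overline{F}$ its canonical extension: for $f\colon X\to\mathcal{P}_{\mathsf{ufs}}Y$, $\overline{F}f( * )=\{*\}$, $\overline{F}f(a,x)=\{(a,y):y\in f(x)\}$, $\overline{F}f(\langle a\rangle x)=\{\langle a\rangle y: y\in f(x)\}$. Bar strings are words over $\overline{\mathbb{A}}=\mathbb{A}\cup\{\mathord{|}a:a\in\mathbb{A}\}$; $=_\alpha$ is the least equivalence with $x\,\mathord{|}a\,v=_\alpha x\,\mathord{|}b\,w$ whenever $\langle a\rangle v=\langle b\rangle w$ (i.e. $a=b,v=w$, or $b\#v$ and $(a\,b)\cdot v=w$);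 $[w]_\alpha$ its classes. $\iota( * )=[\varepsilon]_\alpha$, $\iota(a,[w]_\alpha)=[aw]_\alpha$, $\iota(\langle a\rangle[w]_\alpha)=[\mathord{|}a\,w]_\alpha$ is the initial $F$-algebra, and $(\overline{\mathbb{A}}^*/{=_\alpha},J\iota^{-1})$ is the terminal $\overline{F}$-coalgebra. An RNNA $(Q,R,F_A)$ consists of an orbit-finite nominal set $Q$, an equivariant relation $R\subseteq Q\times\overline{\mathbb{A}}\times Q$ (write $q\xrightarrow{\sigma}q'$) and an equivariant set $F_A\subseteq Q$ of final states, such that (a) if $q\xrightarrow{\mathord{|}a}q'$ and $\langle a\rangle q'=\langle b\rangle q''$ then $q\xrightarrow{\mathord{|}b}q''$, and (b) for each $q$ the sets $\{(a,q'):q\xrightarrow{a}q'\}$ and $\{\langle a\rangle q':q\xrightarrow{\mathord{|}a}q'\}$ are finite. $q$ accepts $w=\sigma_1\cdots\sigma_n\in\overline{\mathbb{A}}^*$ if there is a run $q\xrightarrow{\sigma_1}q_1\cdots\xrightarrow{\sigma_n}q_n$ with $q_n$ final; the bar language accepted by $q$ is $\{[w]_\alpha: q\text{ accepts }w\}$. *)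

theory Defs
  imports Main
begin

type_synonym name = nat

definition fperm :: "(name \<Rightarrow> name) \<Rightarrow> bool" where
  "fperm p \<longleftrightarrow> bij p \<and> finite {a. p a \<noteq> a}"

definition sw :: "name \<Rightarrow> name \<Rightarrow> name \<Rightarrow> name" where
  "sw a b = id(a := b, b := a)"

definition supports :: "((name \<Rightarrow> name) \<Rightarrow> 'x \<Rightarrow> 'x) \<Rightarrow> name set \<Rightarrow> 'x \<Rightarrow> bool" where
  "supports act A x \<longleftrightarrow> (\<forall>p. fperm p \<and> (\<forall>a\<in>A. p a = a) \<longrightarrow> act p x = x)"

definition supp :: "((name \<Rightarrow> name) \<Rightarrow> 'x \<Rightarrow> 'x) \<Rightarrow> 'x \<Rightarrow> name set" where
  "supp act x = \<Inter> {A. finite A \<and> supports act A x}"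

definition nominal_set :: "((name \<Rightarrow> name) \<Rightarrow> 'x \<Rightarrow> 'x) \<Rightarrow> bool" where
  "nominal_set act \<longleftrightarrow>
     (\<forall>x. act id x = x) \<and>
     (\<forall>p q x. fperm p \<and> fperm q \<longrightarrow> act (p \<circ> q) x = act p (act q x)) \<and>
     (\<forall>x. \<exists>A. finite A \<and> supports act A x)"

definition orbit :: "((name \<Rightarrow> name) \<Rightarrow> 'x \<Rightarrow> 'x) \<Rightarrow> 'x \<Rightarrow> 'x set" where
  "orbit act x = {act p x | p. fperm p}"

definition orbit_finite :: "((name \<Rightarrow> name) \<Rightarrow> 'x \<Rightarrow> 'x) \<Rightarrow> bool" where
  "orbit_finite act \<longleftrightarrow> finite (range (orbit act))"

definition abs_eq :: "((name \<Rightarrow> name) \<Rightarrow> 'x \<Rightarrow> 'x) \<Rightarrow> name \<Rightarrow> 'x \<Rightarrow> name \<Rightarrow> 'x \<Rightarrow> bool" where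
  "abs_eq act a x b y \<longleftrightarrow>
     (\<exists>c. c \<noteq> a \<and> c \<noteq> b \<and> c \<notin> supp act x \<and> c \<notin> supp act y \<and>
          act (sw a c) x = act (sw b c) y)"

definition absclass :: "((name \<Rightarrow> name) \<Rightarrow> 'x \<Rightarrow> 'x) \<Rightarrow> name \<Rightarrow> 'x \<Rightarrow> (name \<times> 'x) set" where
  "absclass act a x = {(b, y). abs_eq act a x b y}"

datatype bar = Plain name | Bind name

fun bact :: "(name \<Rightarrow> name) \<Rightarrow> bar \<Rightarrow> bar" where
  "bact p (Plain a) = Plain (p a)"
| "bact p (Bind a) = Bind (p a)"

definition blact :: "(name \<Rightarrow> name) \<Rightarrow> bar list \<Rightarrow> bar list" where
  "blact p w = map (bact p) w"

inductive alpha :: "bar list \<Rightarrow> bar list \<Rightarrow> bool" where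
  alpha_refl: "alpha w w"
| alpha_sym: "alpha v w \<Longrightarrow> alpha w v"
| alpha_trans: "alpha u v \<Longrightarrow> alpha v w \<Longrightarrow> alpha u w"
| alpha_step: "abs_eq blact a v b w \<Longrightarrow> alpha (x @ Bind a # v) (x @ Bind b # w)"

definition acls :: "bar list \<Rightarrow> bar list set" where
  "acls w = {v. alpha w v}"

definition AC :: "bar list set set" where
  "AC = range acls"

definition clact :: "(name \<Rightarrow> name) \<Rightarrow> bar list set \<Rightarrow> bar list set" where
  "clact p L = blact p ` L"

section \<open>The functor F X = 1 + A x X + [A]X and its Kleisli extension\<close>

datatype 'x Fo = FStar | FLit name 'x | FAbs "(name \<times> 'x) set"

definition kcomp :: "('y \<Rightarrow> 'z set) \<Rightarrow> ('x \<Rightarrow> 'y set) \<Rightarrow> 'x \<Rightarrow> 'z set" where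
  "kcomp g f x = \<Union> (g ` f x)"

text \<open>canonical extension \<open>\<overline>F\<close> of F to Kl(P_ufs); on abstractions via any representative\<close>
fun Fbar :: "((name \<Rightarrow> name) \<Rightarrow> 'y \<Rightarrow> 'y) \<Rightarrow> ('x \<Rightarrow> 'y set) \<Rightarrow> 'x Fo \<Rightarrow> 'y Fo set" where
  "Fbar actY f FStar = {FStar}"
| "Fbar actY f (FLit a x) = {FLit a y | y. y \<in> f x}"
| "Fbar actY f (FAbs C) = {FAbs (absclass actY a y) | a x y. (a, x) \<in> C \<and> y \<in> f x}"

text \<open>The carrier F(A-bar-star / =alpha) of well-formed elements\<close>
definition FC :: "bar list set Fo set" where
  "FC = {FStar} \<union> {FLit a L | a L. L \<in> AC} \<union> {FAbs (absclass clact a L) | a L. L \<in> AC}"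

fun iota :: "bar list set Fo \<Rightarrow> bar list set" where
  "iota FStar = acls []"
| "iota (FLit a L) = {v. \<exists>w\<in>L. alpha (Plain a # w) v}"
| "iota (FAbs C) = {v. \<exists>(b, L)\<in>C. \<exists>w\<in>L. alpha (Bind b # w) v}"

definition rnna :: "((name \<Rightarrow> name) \<Rightarrow> 'q \<Rightarrow> 'q) \<Rightarrow> ('q \<times> bar \<times> 'q) set \<Rightarrow> 'q set \<Rightarrow> bool" where
  "rnna act R Fin \<longleftrightarrow>
     nominal_set act \<and> orbit_finite act \<and>
     (\<forall>p q s q'. fperm p \<and> (q, s, q') \<in> R \<longrightarrow> (act p q, bact p s, act p q') \<in> R) \<and>
     (\<forall>p q. fperm p \<and> q \<in> Fin \<longrightarrow> act p q \<in> Fin) \<and>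
     (\<forall>q a q' b q''. (q, Bind a, q') \<in> R \<and> abs_eq act a q' b q''
                      \<longrightarrow> (q, Bind b, q'') \<in> R) \<and>
     (\<forall>q. finite {(a, q'). (q, Plain a, q') \<in> R}) \<and>
     (\<forall>q. finite {absclass act a q' | a q'. (q, Bind a, q') \<in> R})"

definition coal :: "((name \<Rightarrow> name) \<Rightarrow> 'q \<Rightarrow> 'q) \<Rightarrow> ('q \<times> bar \<times> 'q) set \<Rightarrow> 'q set \<Rightarrow> 'q \<Rightarrow> 'q Fo set" where
  "coal act R Fin q =
     {FStar | _::unit. q \<in> Fin} \<union> {FLit a q' | a q'. (q, Plain a, q') \<in> R}
     \<union> {FAbs (absclass act a q') | a q'. (q, Bind a, q') \<in> R}"

fun accepts :: "('q \<times> bar \<times> 'q) set \<Rightarrow> 'q set \<Rightarrow> 'q \<Rightarrow> bar list \<Rightarrow> bool" where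
  "accepts R Fin q [] \<longleftrightarrow> q \<in> Fin"
| "accepts R Fin q (s # w) \<longleftrightarrow> (\<exists>q'. (q, s, q') \<in> R \<and> accepts R Fin q' w)"

definition bar_lang :: "('q \<times> bar \<times> 'q) set \<Rightarrow> 'q set \<Rightarrow> 'q \<Rightarrow> bar list set set" where
  "bar_lang R Fin q = {acls w | w. accepts R Fin q w}"

text \<open>Kleisli morphisms from (Q,c) to the terminal coalgebra (A-bar-star/=alpha, J iota^-1):
 equivariant maps into uniformly finitely supported sets of alpha-classes
 satisfying  J iota^-1 \<bullet> tr = Fbar tr \<bullet> c.\<close>
definition trace_morph :: "((name \<Rightarrow> name) \<Rightarrow> 'q \<Rightarrow> 'q) \<Rightarrow> ('q \<times> bar \<times> 'q) set \<Rightarrow> 'q set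
                           \<Rightarrow> ('q \<Rightarrow> bar list set set) \<Rightarrow> bool" where
  "trace_morph act R Fin tr \<longleftrightarrow>
     (\<forall>q. tr q \<subseteq> AC) \<and>
     (\<forall>q. finite (\<Union>L\<in>tr q. supp clact L)) \<and>
     (\<forall>p q. fperm p \<longrightarrow> tr (act p q) = clact p ` tr q) \<and>
     kcomp (\<lambda>L. {inv_into FC iota L}) tr = kcomp (Fbar clact tr) (coal act R Fin)"

end

theory Submission
  imports Defs
begin

text \<open>The bar language map satisfies the one-step equation
  \<open>L(q) = {[\<epsilon>] | q final} \<union> {[\<sigma> v] | q \<rightarrow>\<sigma> q', [v] \<in> L(q')}\<close>, and this is exactly the
  coalgebra-morphism equation once \<open>\<iota>\<close> is known to be a bijection whose inverse sends \<open>[w]\<close> to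
  the head decomposition of \<open>w\<close>. That inverse is well defined because alpha-equivalent bar
  strings start with the same letter (for a bound letter: up to abstraction of the tails).
  Any solution of the equation is unique by induction on word length, alpha-equivalence being
  length preserving. Uniform finite support holds since the free names of the words of length
  at most \<open>n\<close> accepted from \<open>q\<close> form a finite set (finite branching up to abstraction) that is
  mapped to itself by every swap fixing \<open>supp q\<close>, and hence lies inside \<open>supp q\<close>.\<close>

section \<open>Swaps and support\<close>

lemma sw_apply: "sw a b x = (if x = a then b else if x = b then a else x)"
  by (simp add: sw_def)

lemma sw_sw [simp]: "sw a b (sw a b x) = x"
  by (simp add: sw_apply)

lemma sw_comp_sw [simp]: "sw a b \<circ> sw a b = id"
  by (rule ext) simp

lemma sw_self [simp]: "sw a a = id"
  by (rule ext) (simp add: sw_apply)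

lemma bij_sw: "bij (sw a b)"
  by (metis bijI' sw_sw)

lemma inj_sw: "inj (sw a b)"
  using bij_is_inj bij_sw by blast

lemma fperm_sw: "fperm (sw a b)"
proof -
  have "{x. sw a b x \<noteq> x} \<subseteq> {a, b}"
    by (auto simp: sw_apply split: if_splits)
  then show ?thesis
    unfolding fperm_def using bij_sw finite_subset by blast
qed

lemma fperm_inv: "fperm p \<Longrightarrow> fperm (inv p)"
proof -
  assume "fperm p"
  then have p: "bij p" "finite {x. p x \<noteq> x}"
    by (auto simp: fperm_def)
  have "{x. inv p x \<noteq> x} \<subseteq> p ` {x. p x \<noteq> x}"
    using p(1) by (auto simp: bij_inv_eq_iff image_iff) (metis bij_inv_eq_iff)
  then show ?thesis
    using p unfolding fperm_def by (meson bij_imp_bij_inv finite_imageI finite_subset)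
qed

lemma inj_sw_conj: "inj p \<Longrightarrow> p (sw a c x) = sw (p a) (p c) (p x)"
  by (auto simp: sw_apply inj_eq)

lemma sw_image_minus: "c \<notin> X \<Longrightarrow> sw a c ` X - {c} = X - {a}"
  by (auto simp: sw_apply image_iff split: if_splits)

lemma obtain_fresh_name:
  assumes "finite (X :: name set)"
  obtains c where "c \<notin> X"
  using ex_new_if_finite[OF infinite_UNIV_nat assms] by blast

text \<open>Otherwise, swapping an element of \<open>X\<close> outside \<open>A\<close> with each of the infinitely many
  names outside \<open>A\<close> would put all of them into \<open>X\<close>.\<close>

lemma subset_if_closed_under_swaps:
  assumes "finite X" "finite (A :: name set)"
    and closed: "\<And>a b. a \<notin> A \<Longrightarrow> b \<notin> A \<Longrightarrow> sw a b ` X \<subseteq> X"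
  shows "X \<subseteq> A"
proof
  fix x assume "x \<in> X"
  show "x \<in> A"
  proof (rule ccontr)
    assume "x \<notin> A"
    have "- A \<subseteq> X"
    proof
      fix b assume "b \<in> - A"
      then have "sw x b x \<in> X"
        using closed[of x b] \<open>x \<in> X\<close> \<open>x \<notin> A\<close> by blast
      then show "b \<in> X" by (simp add: sw_apply)
    qed
    then show False
      using assms(1,2) finite_subset infinite_UNIV_nat by (metis Compl_partition2 finite_UnI)
  qed
qed

lemma supp_subset: "finite A \<Longrightarrow> supports act A x \<Longrightarrow> supp act x \<subseteq> A"
  unfolding supp_def by (intro Inter_lower) simp

lemma supp_eqI:
  assumes "finite S" "supports act S x"
    and moved: "\<And>a b. a \<in> S \<Longrightarrow> b \<notin> S \<Longrightarrow> act (sw a b) x \<noteq> x"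
  shows "supp act x = S"
proof
  show "supp act x \<subseteq> S"
    using assms(1,2) by (rule supp_subset)
  show "S \<subseteq> supp act x"
    unfolding supp_def
  proof (intro Inter_greatest subsetI)
    fix a A assume "A \<in> {A. finite A \<and> supports act A x}" "a \<in> S"
    then have A: "finite A" "supports act A x" by auto
    show "a \<in> A"
    proof (rule ccontr)
      assume "a \<notin> A"
      obtain b where b: "b \<notin> A \<union> S"
        using A(1) assms(1) by (metis finite_Un obtain_fresh_name)
      have "\<forall>y\<in>A. sw a b y = y"
        using \<open>a \<notin> A\<close> b by (auto simp: sw_apply)
      then have "act (sw a b) x = x"
        using A(2) fperm_sw unfolding supports_def by blast
      then show False
        using moved \<open>a \<in> S\<close> b by blast
    qed
  qed
qed

lemma abs_eq_refl: "nominal_set act \<Longrightarrow> abs_eq act a x a x"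
proof -
  assume "nominal_set act"
  then obtain A where A: "finite A" "supports act A x"
    unfolding nominal_set_def by blast
  obtain c where "c \<notin> insert a A"
    using A(1) by (metis finite_insert obtain_fresh_name)
  then show ?thesis
    using supp_subset[OF A] unfolding abs_eq_def by blast
qed

fun bar_name :: "bar \<Rightarrow> name" where
  "bar_name (Plain a) = a"
| "bar_name (Bind a) = a"

definition names :: "bar list \<Rightarrow> name set" where
  "names w = bar_name ` set w"

fun free_names :: "bar list \<Rightarrow> name set" where
  "free_names [] = {}"
| "free_names (Plain a # w) = insert a (free_names w)"
| "free_names (Bind a # w) = free_names w - {a}"

lemma names_simps [simp]:
  "names [] = {}"
  "names (s # w) = insert (bar_name s) (names w)"
  by (auto simp: names_def)

lemma finite_names [simp]: "finite (names w)"
  by (simp add: names_def)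

lemma free_names_subset_names: "free_names w \<subseteq> names w"
  by (induction w rule: free_names.induct) auto

lemma finite_free_names [simp]: "finite (free_names w)"
  using free_names_subset_names finite_names finite_subset by blast

lemma blact_simps [simp]:
  "blact p [] = []"
  "blact p (s # w) = bact p s # blact p w"
  by (auto simp: blact_def)

lemma bar_name_bact [simp]: "bar_name (bact p s) = p (bar_name s)"
  by (cases s) auto

lemma bact_bact [simp]: "bact p (bact q s) = bact (p \<circ> q) s"
  by (cases s) auto

lemma blact_blact: "blact p (blact q w) = blact (p \<circ> q) w"
  by (induction w) (simp_all only: blact_simps bact_bact)

lemma bact_id [simp]: "bact id s = s"
  by (cases s) auto

lemma blact_id [simp]: "blact id w = w"
  by (induction w) (simp_all only: blact_simps bact_id)

lemma length_blact [simp]: "length (blact p w) = length w"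
  by (simp add: blact_def)

lemma blact_sw_sw [simp]: "blact (sw a b) (blact (sw a b) w) = w"
  by (simp add: blact_blact)

lemma blact_cong: "(\<And>x. x \<in> names w \<Longrightarrow> p x = q x) \<Longrightarrow> blact p w = blact q w"
proof (induction w)
  case (Cons s w)
  then show ?case by (cases s) auto
qed simp

lemma names_blact [simp]: "names (blact p w) = p ` names w"
  by (induction w) auto

lemma free_names_blact: "inj p \<Longrightarrow> free_names (blact p w) = p ` free_names w"
proof (induction w rule: free_names.induct)
  case (3 a w)
  then show ?case by (auto simp: inj_eq)
qed auto

lemma supp_blact: "supp blact w = names w"
proof (rule supp_eqI)
  show "supports blact (names w) w"
    unfolding supports_def using blact_cong[of w _ id] by auto
  show "blact (sw a b) w \<noteq> w" if "a \<in> names w" "b \<notin> names w" for a b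
    using that by (metis image_eqI names_blact sw_apply)
qed simp

lemma abs_eq_blact: "abs_eq blact a v b w \<longleftrightarrow>
  (\<exists>c. c \<noteq> a \<and> c \<noteq> b \<and> c \<notin> names v \<and> c \<notin> names w \<and> blact (sw a c) v = blact (sw b c) w)"
  by (simp add: abs_eq_def supp_blact)

section \<open>Alpha-equivalence\<close>

lemma alpha_length: "alpha u v \<Longrightarrow> length u = length v"
  by (induction rule: alpha.induct) (auto simp: abs_eq_blact, metis length_blact)

lemma alpha_Cons: "alpha u v \<Longrightarrow> alpha (s # u) (s # v)"
proof (induction rule: alpha.induct)
  case (alpha_step a v b w x)
  then show ?case using alpha.alpha_step[of a v b w "s # x"] by simp
qed (auto intro: alpha.intros)

lemma alpha_blact:
  assumes "inj p"
  shows "alpha u v \<Longrightarrow> alpha (blact p u) (blact p v)"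
proof (induction rule: alpha.induct)
  case (alpha_step a v b w x)
  then obtain c where c: "c \<noteq> a" "c \<noteq> b" "c \<notin> names v" "c \<notin> names w"
    "blact (sw a c) v = blact (sw b c) w"
    by (auto simp: abs_eq_blact)
  have "blact (sw (p a) (p c)) (blact p u) = blact p (blact (sw a c) u)" for a u
    using assms by (auto intro!: blact_cong simp: blact_blact inj_sw_conj)
  then have "blact (sw (p a) (p c)) (blact p v) = blact (sw (p b) (p c)) (blact p w)"
    using c(5) by metis
  then have "abs_eq blact (p a) (blact p v) (p b) (blact p w)"
    unfolding abs_eq_blact using c assms by (intro exI[of _ "p c"]) (auto simp: inj_eq)
  then show ?case
    using alpha.alpha_step by (simp add: blact_def)
qed (auto intro: alpha.intros)

lemma free_names_alpha: "alpha u v \<Longrightarrow> free_names u = free_names v"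
proof (induction rule: alpha.induct)
  case (alpha_step a v b w x)
  then obtain c where c: "c \<notin> names v" "c \<notin> names w" "blact (sw a c) v = blact (sw b c) w"
    by (auto simp: abs_eq_blact)
  then have "sw a c ` free_names v = sw b c ` free_names w"
    by (metis free_names_blact inj_sw)
  moreover have "c \<notin> free_names v" "c \<notin> free_names w"
    using c free_names_subset_names by auto
  ultimately have "free_names (Bind a # v) = free_names (Bind b # w)"
    by (metis free_names.simps(3) sw_image_minus)
  then show ?case
    by (induction x rule: free_names.induct) auto
qed auto

lemma alpha_Bind_rename_fresh:
  assumes "c \<notin> names v"
  shows "alpha (Bind a # v) (Bind c # blact (sw a c) v)"
proof (cases "c = a")
  case False
  obtain e where e: "e \<notin> names v \<union> {a, c}"
    by (meson finite_Un finite_insert finite.emptyI finite_names obtain_fresh_name)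
  have "blact (sw a e) v = blact (sw c e) (blact (sw a c) v)"
    using assms e by (auto intro!: blact_cong simp: blact_blact sw_apply)
  moreover have "e \<notin> names (blact (sw a c) v)"
    using assms e by (auto simp: sw_apply)
  ultimately have "abs_eq blact a v c (blact (sw a c) v)"
    unfolding abs_eq_blact using e by (intro exI[of _ e]) auto
  then show ?thesis
    using alpha_step[of a v c _ "[]"] by simp
qed (simp add: alpha_refl)

lemma alpha_avoid: "c \<notin> free_names v \<Longrightarrow> \<exists>v'. alpha v v' \<and> c \<notin> names v'"
proof (induction "length v" arbitrary: v rule: less_induct)
  case less
  show ?case
  proof (cases v rule: free_names.cases)
    case 1
    then show ?thesis using alpha_refl by (intro exI[of _ "[]"]) simp
  next
    case (2 d u)
    then obtain u' where "alpha u u'" "c \<notin> names u'"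
      using less by auto
    then show ?thesis
      using 2 less.prems by (intro exI[of _ "Plain d # u'"]) (auto intro: alpha_Cons)
  next
    case (3 d u)
    obtain d' where d': "d' \<notin> names u \<union> {c, d}"
      by (meson finite_Un finite_insert finite.emptyI finite_names obtain_fresh_name)
    have "c \<notin> free_names (blact (sw d d') u)"
      using less.prems d' 3 free_names_subset_names
      by (auto simp: free_names_blact[OF inj_sw] sw_apply)
    then obtain u' where u': "alpha (blact (sw d d') u) u'" "c \<notin> names u'"
      using less.hyps[of "blact (sw d d') u"] 3 by auto
    have "alpha v (Bind d' # blact (sw d d') u)"
      using 3 d' alpha_Bind_rename_fresh by auto
    then show ?thesis
      using u' d' alpha_Cons alpha_trans by (intro exI[of _ "Bind d' # u'"]) auto
  qed
qed

lemma alpha_Bind_rename: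
  assumes "c \<notin> free_names v"
  shows "alpha (Bind a # v) (Bind c # blact (sw a c) v)"
proof -
  obtain v' where v': "alpha v v'" "c \<notin> names v'"
    using alpha_avoid assms by blast
  have "alpha (Bind a # v) (Bind a # v')"
    using v' alpha_Cons by blast
  moreover have "alpha (Bind a # v') (Bind c # blact (sw a c) v')"
    using alpha_Bind_rename_fresh v' by blast
  moreover have "alpha (Bind c # blact (sw a c) v') (Bind c # blact (sw a c) v)"
    using alpha_blact[OF inj_sw v'(1)] alpha_sym alpha_Cons by blast
  ultimately show ?thesis
    using alpha_trans by blast
qed

lemma alpha_blact_fix:
  "fperm p \<Longrightarrow> (\<And>x. x \<in> free_names w \<Longrightarrow> p x = x) \<Longrightarrow> alpha w (blact p w)"
proof (induction "length w" arbitrary: w rule: less_induct)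
  case less
  show ?case
  proof (cases w rule: free_names.cases)
    case 1
    then show ?thesis using alpha_refl by simp
  next
    case (2 a v)
    then have "alpha v (blact p v)"
      using less by auto
    then show ?thesis
      using 2 less.prems(2) alpha_Cons by fastforce
  next
    case (3 a v)
    have "finite {x. p x \<noteq> x}"
      using less.prems(1) by (simp add: fperm_def)
    then obtain c where c: "c \<notin> names v \<union> {a, p a} \<union> {x. p x \<noteq> x}"
      by (meson finite_Un finite_insert finite.emptyI finite_names obtain_fresh_name)
    let ?v = "blact (sw a c) v"
    have renamed: "alpha w (Bind c # ?v)"
      using 3 c free_names_subset_names alpha_Bind_rename by blast
    have "p x = x" if "x \<in> free_names ?v" for x
      using that c less.prems(2) 3 free_names_subset_names
      by (auto simp: free_names_blact[OF inj_sw] sw_apply)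
    then have "alpha ?v (blact p ?v)"
      using less 3 by simp
    then have "alpha (Bind c # ?v) (blact p (Bind c # ?v))"
      using c alpha_Cons by fastforce
    moreover have "alpha (blact p w) (blact p (Bind c # ?v))"
      using alpha_blact[OF _ renamed] less.prems(1) unfolding fperm_def by (metis bij_is_inj)
    ultimately show ?thesis
      using renamed alpha_trans alpha_sym by metis
  qed
qed

section \<open>Inversion of alpha-equivalence\<close>

text \<open>The alpha-analogue of \<^const>\<open>abs_eq\<close> with the fresh name quantified universally; by the
  some/any property of fresh names it coincides with the existential version, and unlike that
  version it is evidently transitive.\<close>

definition alpha_abs :: "name \<Rightarrow> bar list \<Rightarrow> name \<Rightarrow> bar list \<Rightarrow> bool" where
  "alpha_abs a v b w \<longleftrightarrow> (\<forall>c. c \<notin> free_names v \<union> free_names w \<union> {a, b} \<longrightarrow>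
     alpha (blact (sw a c) v) (blact (sw b c) w))"

lemma alpha_sw_change_fresh:
  assumes "c \<notin> free_names v" "d \<notin> free_names v" "c \<noteq> a" "d \<noteq> a"
  shows "alpha (blact (sw a c) v) (blact (sw c d) (blact (sw a d) v))"
proof -
  have "alpha v (blact (sw c d) v)"
    using assms by (intro alpha_blact_fix fperm_sw) (auto simp: sw_apply)
  then have "alpha (blact (sw a c) v) (blact (sw a c) (blact (sw c d) v))"
    using alpha_blact inj_sw by blast
  moreover have "sw a c \<circ> sw c d = sw c d \<circ> sw a d"
    using assms(3,4) by (auto simp: sw_apply)
  ultimately show ?thesis
    by (simp add: blact_blact)
qed

lemma alpha_absI:
  assumes "d \<notin> free_names v \<union> free_names w \<union> {a, b}"
    and "alpha (blact (sw a d) v) (blact (sw b d) w)"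
  shows "alpha_abs a v b w"
  unfolding alpha_abs_def
proof (intro allI impI)
  fix c assume c: "c \<notin> free_names v \<union> free_names w \<union> {a, b}"
  have "alpha (blact (sw a c) v) (blact (sw c d) (blact (sw a d) v))"
    "alpha (blact (sw b c) w) (blact (sw c d) (blact (sw b d) w))"
    using alpha_sw_change_fresh assms(1) c by auto
  moreover have "alpha (blact (sw c d) (blact (sw a d) v)) (blact (sw c d) (blact (sw b d) w))"
    using alpha_blact[OF inj_sw assms(2)] .
  ultimately show "alpha (blact (sw a c) v) (blact (sw b c) w)"
    using alpha_trans alpha_sym by meson
qed

lemma alpha_abs_sym: "alpha_abs a v b w \<Longrightarrow> alpha_abs b w a v"
  unfolding alpha_abs_def using alpha_sym by blast

lemma alpha_abs_trans:
  assumes "alpha_abs a v b w" "alpha_abs b w d u"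
  shows "alpha_abs a v d u"
proof -
  obtain c where c: "c \<notin> free_names v \<union> free_names w \<union> free_names u \<union> {a, b, d}"
    by (meson finite_Un finite_insert finite.emptyI finite_free_names obtain_fresh_name)
  then have "alpha (blact (sw a c) v) (blact (sw d c) u)"
    using assms alpha_trans unfolding alpha_abs_def by blast
  then show ?thesis
    using c by (intro alpha_absI) auto
qed

lemma alpha_abs_same: "alpha v w \<Longrightarrow> alpha_abs a v a w"
  unfolding alpha_abs_def using alpha_blact inj_sw by blast

text \<open>An equivalence relation containing the generating steps of alpha, hence alpha itself; this
  is how alpha-equivalent strings are seen to agree on their first letter.\<close>

definition alpha_head :: "bar list \<Rightarrow> bar list \<Rightarrow> bool" where
  "alpha_head u v \<longleftrightarrow> (u = [] \<and> v = [])
     \<or> (\<exists>a w w'. u = Plain a # w \<and> v = Plain a # w' \<and> alpha w w')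
     \<or> (\<exists>a b w w'. u = Bind a # w \<and> v = Bind b # w' \<and> alpha_abs a w b w')"

lemma alpha_head_refl: "alpha_head w w"
  by (cases w rule: free_names.cases) (auto simp: alpha_head_def intro: alpha_refl alpha_abs_same)

lemma alpha_head_sym: "alpha_head u v \<Longrightarrow> alpha_head v u"
  unfolding alpha_head_def using alpha_sym alpha_abs_sym by blast

lemma alpha_head_trans: "alpha_head u v \<Longrightarrow> alpha_head v w \<Longrightarrow> alpha_head u w"
  unfolding alpha_head_def by (auto intro: alpha_trans alpha_abs_trans)

lemma alpha_head_if_alpha: "alpha u v \<Longrightarrow> alpha_head u v"
proof (induction rule: alpha.induct)
  case (alpha_step a v b w x)
  show ?case
  proof (cases x)
    case Nil
    obtain c where c: "c \<noteq> a" "c \<noteq> b" "c \<notin> names v" "c \<notin> names w"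
      "blact (sw a c) v = blact (sw b c) w"
      using alpha_step by (auto simp: abs_eq_blact)
    then have "alpha_abs a v b w"
      using free_names_subset_names by (intro alpha_absI[of c]) (auto intro: alpha_refl)
    then show ?thesis
      using Nil by (simp add: alpha_head_def)
  next
    case (Cons s x')
    have "alpha (x' @ Bind a # v) (x' @ Bind b # w)"
      using alpha.alpha_step alpha_step by blast
    then show ?thesis
      using Cons alpha_abs_same by (cases s) (auto simp: alpha_head_def)
  qed
qed (use alpha_head_refl alpha_head_sym alpha_head_trans in blast)+

lemma alpha_Nil: "alpha [] v \<longleftrightarrow> v = []"
  using alpha_length alpha_refl by fastforce

lemma alpha_Plain_Cons: "alpha (Plain a # w) v \<Longrightarrow> \<exists>w'. v = Plain a # w' \<and> alpha w w'"
  using alpha_head_if_alpha unfolding alpha_head_def by blast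

lemma alpha_Bind_Cons: "alpha (Bind a # w) v \<Longrightarrow> \<exists>b w'. v = Bind b # w'"
  using alpha_head_if_alpha unfolding alpha_head_def by blast

lemma alpha_Bind_iff: "alpha (Bind a # v) (Bind b # w) \<longleftrightarrow> alpha_abs a v b w"
proof
  assume "alpha (Bind a # v) (Bind b # w)"
  then show "alpha_abs a v b w"
    using alpha_head_if_alpha unfolding alpha_head_def by blast
next
  assume abs: "alpha_abs a v b w"
  obtain c where c: "c \<notin> free_names v \<union> free_names w \<union> {a, b}"
    by (meson finite_Un finite_insert finite.emptyI finite_free_names obtain_fresh_name)
  have "alpha (Bind a # v) (Bind c # blact (sw a c) v)"
    "alpha (Bind b # w) (Bind c # blact (sw b c) w)"
    using alpha_Bind_rename c by auto
  moreover have "alpha (Bind c # blact (sw a c) v) (Bind c # blact (sw b c) w)"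
    using abs c alpha_Cons unfolding alpha_abs_def by blast
  ultimately show "alpha (Bind a # v) (Bind b # w)"
    using alpha_trans alpha_sym by meson
qed

lemma acls_eq_iff: "acls u = acls v \<longleftrightarrow> alpha u v"
proof
  assume "acls u = acls v"
  then show "alpha u v"
    using alpha_refl unfolding acls_def by blast
next
  assume "alpha u v"
  then show "acls u = acls v"
    unfolding acls_def using alpha_trans alpha_sym by blast
qed

lemma clact_acls:
  assumes "bij p"
  shows "clact p (acls w) = acls (blact p w)"
proof
  show "clact p (acls w) \<subseteq> acls (blact p w)"
    using alpha_blact assms bij_is_inj by (auto simp: clact_def acls_def)
  show "acls (blact p w) \<subseteq> clact p (acls w)"
  proof
    fix v assume "v \<in> acls (blact p w)"
    then have "alpha (blact (inv p) (blact p w)) (blact (inv p) v)"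
      using alpha_blact assms bij_imp_bij_inv bij_is_inj unfolding acls_def by blast
    moreover have "inv p \<circ> p = id" "p \<circ> inv p = id"
      using assms by (simp_all add: bij_is_inj bij_is_surj surj_iff[symmetric])
    ultimately have "blact (inv p) v \<in> acls w" "v = blact p (blact (inv p) v)"
      unfolding acls_def by (simp_all add: blact_blact)
    then show "v \<in> clact p (acls w)"
      unfolding clact_def by blast
  qed
qed

lemma clact_sw_sw [simp]: "clact (sw a b) (clact (sw a b) L) = L"
  by (simp add: clact_def image_image)

lemma supp_acls: "supp clact (acls w) = free_names w"
proof (rule supp_eqI)
  show "supports clact (free_names w) (acls w)"
    unfolding supports_def
  proof (intro allI impI)
    fix p assume p: "fperm p \<and> (\<forall>a\<in>free_names w. p a = a)"
    then have "alpha (blact p w) w"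
      using alpha_blact_fix alpha_sym by blast
    then show "clact p (acls w) = acls w"
      using p clact_acls acls_eq_iff unfolding fperm_def by auto
  qed
  show "clact (sw a b) (acls w) \<noteq> acls w" if "a \<in> free_names w" "b \<notin> free_names w" for a b
  proof
    assume "clact (sw a b) (acls w) = acls w"
    then have "alpha (blact (sw a b) w) w"
      by (simp add: clact_acls[OF bij_sw] acls_eq_iff)
    then have "sw a b ` free_names w = free_names w"
      using free_names_alpha free_names_blact[OF inj_sw] by metis
    then show False
      using that by (metis image_eqI sw_apply)
  qed
qed simp

lemma abs_eq_acls_iff: "abs_eq clact a (acls v) b (acls w) \<longleftrightarrow> alpha (Bind a # v) (Bind b # w)"
proof -
  have "abs_eq clact a (acls v) b (acls w) \<longleftrightarrow> (\<exists>c. c \<noteq> a \<and> c \<noteq> b \<and>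
    c \<notin> free_names v \<and> c \<notin> free_names w \<and> alpha (blact (sw a c) v) (blact (sw b c) w))"
    unfolding abs_eq_def supp_acls clact_acls[OF bij_sw] acls_eq_iff ..
  also have "\<dots> \<longleftrightarrow> alpha_abs a v b w"
  proof
    show "alpha_abs a v b w" if "\<exists>c. c \<noteq> a \<and> c \<noteq> b \<and> c \<notin> free_names v \<and>
      c \<notin> free_names w \<and> alpha (blact (sw a c) v) (blact (sw b c) w)"
      using that alpha_absI by blast
    obtain c where "c \<notin> free_names v \<union> free_names w \<union> {a, b}"
      by (meson finite_Un finite_insert finite.emptyI finite_free_names obtain_fresh_name)
    then show "\<exists>c. c \<noteq> a \<and> c \<noteq> b \<and> c \<notin> free_names v \<and>
      c \<notin> free_names w \<and> alpha (blact (sw a c) v) (blact (sw b c) w)" if "alpha_abs a v b w"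
      using that unfolding alpha_abs_def by blast
  qed
  finally show ?thesis
    by (simp add: alpha_Bind_iff)
qed

lemma mem_absclass_acls:
  "(d, L) \<in> absclass clact a (acls w) \<longleftrightarrow> (\<exists>u. L = acls u \<and> alpha (Bind a # w) (Bind d # u))"
proof
  assume L: "(d, L) \<in> absclass clact a (acls w)"
  then obtain c where "clact (sw a c) (acls w) = clact (sw d c) L"
    unfolding absclass_def abs_eq_def by blast
  then have "L = clact (sw d c) (clact (sw a c) (acls w))"
    by (metis clact_sw_sw)
  also have "\<dots> = acls (blact (sw d c) (blact (sw a c) w))"
    by (simp add: clact_acls bij_sw)
  finally have L_eq: "L = acls (blact (sw d c) (blact (sw a c) w))" .
  then have "abs_eq clact a (acls w) d (acls (blact (sw d c) (blact (sw a c) w)))"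
    using L unfolding absclass_def by simp
  then show "\<exists>u. L = acls u \<and> alpha (Bind a # w) (Bind d # u)"
    using L_eq abs_eq_acls_iff by blast
next
  assume "\<exists>u. L = acls u \<and> alpha (Bind a # w) (Bind d # u)"
  then show "(d, L) \<in> absclass clact a (acls w)"
    unfolding absclass_def using abs_eq_acls_iff by blast
qed

section \<open>Equivariance of acceptance\<close>

lemma rnna_nominal_set: "rnna act R Fin \<Longrightarrow> nominal_set act"
  by (simp add: rnna_def)

lemma rnna_step_act:
  "rnna act R Fin \<Longrightarrow> fperm p \<Longrightarrow> (q, s, q') \<in> R \<Longrightarrow> (act p q, bact p s, act p q') \<in> R"
  by (simp add: rnna_def)

lemma rnna_final_act: "rnna act R Fin \<Longrightarrow> fperm p \<Longrightarrow> q \<in> Fin \<Longrightarrow> act p q \<in> Fin"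
  by (simp add: rnna_def)

lemma rnna_finite_Plain: "rnna act R Fin \<Longrightarrow> finite {(a, q'). (q, Plain a, q') \<in> R}"
  by (simp add: rnna_def)

lemma rnna_finite_Bind_classes:
  "rnna act R Fin \<Longrightarrow> finite {absclass act a q' | a q'. (q, Bind a, q') \<in> R}"
  by (simp add: rnna_def)

lemma rnna_Bind_abs_eq:
  "rnna act R Fin \<Longrightarrow> (q, Bind a, q') \<in> R \<Longrightarrow> abs_eq act a q' b q'' \<Longrightarrow> (q, Bind b, q'') \<in> R"
  unfolding rnna_def by blast

lemma accepts_blact:
  assumes "rnna act R Fin" "fperm p"
  shows "accepts R Fin q w \<Longrightarrow> accepts R Fin (act p q) (blact p w)"
proof (induction w arbitrary: q)
  case Nil
  then show ?case using rnna_final_act[OF assms] by simp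
next
  case (Cons s w)
  then obtain q' where "(q, s, q') \<in> R" "accepts R Fin q' w"
    by auto
  then show ?case
    using Cons.IH rnna_step_act[OF assms] by (auto intro!: exI[of _ "act p q'"])
qed

lemma accepted_words_act:
  assumes "rnna act R Fin" "fperm p"
  shows "{w. accepts R Fin (act p q) w} = blact p ` {w. accepts R Fin q w}"
proof
  show "blact p ` {w. accepts R Fin q w} \<subseteq> {w. accepts R Fin (act p q) w}"
    using accepts_blact[OF assms] by blast
  show "{w. accepts R Fin (act p q) w} \<subseteq> blact p ` {w. accepts R Fin q w}"
  proof
    fix w assume "w \<in> {w. accepts R Fin (act p q) w}"
    then have "accepts R Fin (act (inv p) (act p q)) (blact (inv p) w)"
      using accepts_blact[OF assms(1) fperm_inv[OF assms(2)]] by blast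
    moreover have "inv p \<circ> p = id" "p \<circ> inv p = id"
      using assms(2) by (simp_all add: fperm_def bij_is_inj bij_is_surj surj_iff[symmetric])
    moreover have "act (inv p) (act p q) = act (inv p \<circ> p) q"
      using rnna_nominal_set[OF assms(1)] fperm_inv[OF assms(2)] assms(2)
      by (simp add: nominal_set_def)
    ultimately have "accepts R Fin q (blact (inv p) w)" "w = blact p (blact (inv p) w)"
      using rnna_nominal_set[OF assms(1)] by (simp_all add: nominal_set_def blact_blact)
    then show "w \<in> blact p ` {w. accepts R Fin q w}"
      by blast
  qed
qed

lemma bar_lang_eq_image: "bar_lang R Fin q = acls ` {w. accepts R Fin q w}"
  by (auto simp: bar_lang_def)

lemma bar_lang_act:
  assumes "rnna act R Fin" "fperm p"
  shows "bar_lang R Fin (act p q) = clact p ` bar_lang R Fin q"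
  using assms(2) unfolding bar_lang_eq_image accepted_words_act[OF assms] image_image
  by (simp add: fperm_def clact_acls)

section \<open>Uniform finite support of accepted languages\<close>

definition accepted_free_names :: "('q \<times> bar \<times> 'q) set \<Rightarrow> 'q set \<Rightarrow> nat \<Rightarrow> 'q \<Rightarrow> name set" where
  "accepted_free_names R Fin n q = (\<Union>w \<in> {w. accepts R Fin q w \<and> length w \<le> n}. free_names w)"

lemma accepted_free_names_act:
  assumes "rnna act R Fin" "fperm p"
  shows "accepted_free_names R Fin n (act p q) = p ` accepted_free_names R Fin n q"
proof -
  have "{w. accepts R Fin (act p q) w \<and> length w \<le> n}
      = {w \<in> blact p ` {w. accepts R Fin q w}. length w \<le> n}"
    using accepted_words_act[OF assms, of q] by auto
  also have "\<dots> = blact p ` {w. accepts R Fin q w \<and> length w \<le> n}"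
    by auto
  moreover have "inj p"
    using assms(2) by (simp add: fperm_def bij_is_inj)
  ultimately show ?thesis
    unfolding accepted_free_names_def by (simp add: image_UN free_names_blact)
qed

lemma accepted_free_names_subset_supports:
  assumes "rnna act R Fin" "finite (accepted_free_names R Fin n q)" "finite A" "supports act A q"
  shows "accepted_free_names R Fin n q \<subseteq> A"
proof (rule subset_if_closed_under_swaps[OF assms(2,3)])
  fix a b assume "a \<notin> A" "b \<notin> A"
  then have "\<forall>x\<in>A. sw a b x = x"
    by (auto simp: sw_apply)
  then have "act (sw a b) q = q"
    using assms(4) fperm_sw unfolding supports_def by blast
  then show "sw a b ` accepted_free_names R Fin n q \<subseteq> accepted_free_names R Fin n q"
    using accepted_free_names_act[OF assms(1) fperm_sw, of n a b q] by simp
qed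

lemma accepted_free_names_subset_supp:
  assumes "rnna act R Fin" "finite (accepted_free_names R Fin n q)"
  shows "accepted_free_names R Fin n q \<subseteq> supp act q"
  unfolding supp_def using accepted_free_names_subset_supports[OF assms] by blast

lemma accepted_free_names_abs_eq:
  assumes "rnna act R Fin" "finite (accepted_free_names R Fin n q)" "finite (accepted_free_names R Fin n q')"
    and "abs_eq act a q b q'"
  shows "accepted_free_names R Fin n q - {a} = accepted_free_names R Fin n q' - {b}"
proof -
  obtain c where c: "c \<notin> supp act q" "c \<notin> supp act q'" "act (sw a c) q = act (sw b c) q'"
    using assms(4) unfolding abs_eq_def by blast
  then have "sw a c ` accepted_free_names R Fin n q = sw b c ` accepted_free_names R Fin n q'"
    by (metis accepted_free_names_act[OF assms(1) fperm_sw])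
  moreover have "c \<notin> accepted_free_names R Fin n q" "c \<notin> accepted_free_names R Fin n q'"
    using accepted_free_names_subset_supp[OF assms(1)] assms(2,3) c(1,2) by blast+
  ultimately show ?thesis
    by (metis sw_image_minus)
qed

lemma finite_image_if_factors:
  assumes "finite (g ` S)" and "\<And>x y. x \<in> S \<Longrightarrow> y \<in> S \<Longrightarrow> g x = g y \<Longrightarrow> f x = f y"
  shows "finite (f ` S)"
proof -
  let ?h = "\<lambda>C. f (SOME x. x \<in> S \<and> g x = C)"
  have factor: "f x = ?h (g x)" if "x \<in> S" for x
  proof -
    have "\<exists>x'. x' \<in> S \<and> g x' = g x"
      using that by blast
    then have "(SOME x'. x' \<in> S \<and> g x' = g x) \<in> S \<and> g (SOME x'. x' \<in> S \<and> g x' = g x) = g x"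
      by (rule someI_ex)
    then show ?thesis
      using assms(2)[OF that] by simp
  qed
  have "f ` S = ?h ` g ` S"
    unfolding image_image by (rule image_cong[OF refl factor])
  then show ?thesis
    using assms(1) by simp
qed

lemma accepted_free_names_Suc_subset:
  "accepted_free_names R Fin (Suc n) q \<subseteq>
     (\<Union>(a, q') \<in> {(a, q'). (q, Plain a, q') \<in> R}. insert a (accepted_free_names R Fin n q'))
     \<union> (\<Union>(a, q') \<in> {(a, q'). (q, Bind a, q') \<in> R}. accepted_free_names R Fin n q' - {a})"
proof
  fix x assume "x \<in> accepted_free_names R Fin (Suc n) q"
  then obtain w where w: "x \<in> free_names w" "accepts R Fin q w" "length w \<le> Suc n"
    unfolding accepted_free_names_def by blast
  then obtain s v q' where v: "w = s # v" "(q, s, q') \<in> R" "accepts R Fin q' v" "length v \<le> n"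
    by (cases w) auto
  then have "free_names v \<subseteq> accepted_free_names R Fin n q'"
    unfolding accepted_free_names_def by blast
  then show "x \<in> (\<Union>(a, q') \<in> {(a, q'). (q, Plain a, q') \<in> R}. insert a (accepted_free_names R Fin n q'))
     \<union> (\<Union>(a, q') \<in> {(a, q'). (q, Bind a, q') \<in> R}. accepted_free_names R Fin n q' - {a})"
    using v(1,2) w(1) by (cases s) auto
qed

text \<open>The set \<open>accepted_free_names n q' - {a}\<close> depends only on the abstraction class of
  \<open>(a, q')\<close>, of which a state has only finitely many bound-name successors.\<close>

lemma finite_accepted_free_names_Bind:
  assumes "rnna act R Fin" and finite_N: "\<And>q'. finite (accepted_free_names R Fin n q')"
  shows "finite ((\<lambda>(a, q'). accepted_free_names R Fin n q' - {a}) ` {(a, q'). (q, Bind a, q') \<in> R})"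
proof (rule finite_image_if_factors)
  have "(\<lambda>(a, q'). absclass act a q') ` {(a, q'). (q, Bind a, q') \<in> R}
      = {absclass act a q' | a q'. (q, Bind a, q') \<in> R}"
    by auto
  then show "finite ((\<lambda>(a, q'). absclass act a q') ` {(a, q'). (q, Bind a, q') \<in> R})"
    using rnna_finite_Bind_classes[OF assms(1)] by simp
  have class_determines: "accepted_free_names R Fin n q1 - {a1} = accepted_free_names R Fin n q2 - {a2}"
    if "absclass act a1 q1 = absclass act a2 q2" for a1 q1 a2 q2
  proof -
    have "(a2, q2) \<in> absclass act a1 q1"
      using that abs_eq_refl[OF rnna_nominal_set[OF assms(1)]] by (simp add: absclass_def)
    then have "abs_eq act a1 q1 a2 q2"
      by (simp add: absclass_def)
    then show ?thesis
      using accepted_free_names_abs_eq[OF assms(1) finite_N finite_N] by blast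
  qed
  fix x y :: "name \<times> 'a"
  assume "(\<lambda>(a, q'). absclass act a q') x = (\<lambda>(a, q'). absclass act a q') y"
  then show "(\<lambda>(a, q'). accepted_free_names R Fin n q' - {a}) x
      = (\<lambda>(a, q'). accepted_free_names R Fin n q' - {a}) y"
    by (cases x, cases y) (auto intro!: class_determines)
qed

lemma finite_accepted_free_names:
  assumes "rnna act R Fin"
  shows "finite (accepted_free_names R Fin n q)"
proof (induction n arbitrary: q)
  case 0
  have "accepted_free_names R Fin 0 q = {}"
    unfolding accepted_free_names_def by auto
  then show ?case by simp
next
  case (Suc n)
  have "finite (\<Union>(a, q') \<in> {(a, q'). (q, Plain a, q') \<in> R}. insert a (accepted_free_names R Fin n q'))"
    using rnna_finite_Plain[OF assms] Suc.IH by auto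
  moreover have "finite (\<Union>(a, q') \<in> {(a, q'). (q, Bind a, q') \<in> R}. accepted_free_names R Fin n q' - {a})"
    using finite_accepted_free_names_Bind[OF assms Suc.IH] Suc.IH by auto
  ultimately show ?case
    using accepted_free_names_Suc_subset finite_subset by (metis finite_UnI)
qed

lemma free_names_accepted_subset_supp:
  assumes "rnna act R Fin" "accepts R Fin q w"
  shows "free_names w \<subseteq> supp act q"
proof -
  have "free_names w \<subseteq> accepted_free_names R Fin (length w) q"
    using assms(2) unfolding accepted_free_names_def by blast
  then show ?thesis
    using accepted_free_names_subset_supp[OF assms(1) finite_accepted_free_names[OF assms(1)]]
    by blast
qed

lemma finite_supp_bar_lang:
  assumes "rnna act R Fin"
  shows "finite (\<Union>L \<in> bar_lang R Fin q. supp clact L)"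
proof -
  have "\<exists>A. finite A \<and> supports act A q"
    using rnna_nominal_set[OF assms] by (simp add: nominal_set_def)
  then have "finite (supp act q)"
    using supp_subset finite_subset by metis
  moreover have "supp clact L \<subseteq> supp act q" if "L \<in> bar_lang R Fin q" for L
    using that free_names_accepted_subset_supp[OF assms] by (auto simp: bar_lang_def supp_acls) blast
  ultimately show ?thesis
    by (meson UN_least finite_subset)
qed

section \<open>The inverse of \<^const>\<open>iota\<close>\<close>

fun split_head :: "bar list \<Rightarrow> bar list set Fo" where
  "split_head [] = FStar"
| "split_head (Plain a # v) = FLit a (acls v)"
| "split_head (Bind a # v) = FAbs (absclass clact a (acls v))"

lemma FC_eq_range_split_head: "FC = range split_head"
proof
  show "range split_head \<subseteq> FC"
  proof
    fix e assume "e \<in> range split_head"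
    then obtain w where "e = split_head w" by blast
    then show "e \<in> FC"
      by (cases w rule: split_head.cases) (auto simp: FC_def AC_def)
  qed
  show "FC \<subseteq> range split_head"
    unfolding FC_def AC_def by (auto intro: split_head.simps[symmetric])
qed

lemma iota_split_head: "iota (split_head w) = acls w"
proof (cases w rule: split_head.cases)
  case 1
  then show ?thesis by simp
next
  case (2 a v)
  have "alpha (Plain a # u) x \<longleftrightarrow> alpha (Plain a # v) x" if "alpha v u" for u x
    using that alpha_Cons alpha_sym alpha_trans by meson
  then show ?thesis
    using 2 by (auto simp: acls_def intro: alpha_refl)
next
  case (3 a v)
  have "(\<exists>(b, L) \<in> absclass clact a (acls v). \<exists>u \<in> L. alpha (Bind b # u) x) \<longleftrightarrow> alpha (Bind a # v) x"
    for x
  proof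
    assume "\<exists>(b, L) \<in> absclass clact a (acls v). \<exists>u \<in> L. alpha (Bind b # u) x"
    then obtain b L u where bL: "(b, L) \<in> absclass clact a (acls v)" "u \<in> L" "alpha (Bind b # u) x"
      by blast
    then obtain u' where "alpha (Bind a # v) (Bind b # u')" "alpha u' u"
      unfolding mem_absclass_acls by (auto simp: acls_def)
    with bL(3) show "alpha (Bind a # v) x"
      using alpha_Cons alpha_trans by meson
  next
    assume "alpha (Bind a # v) x"
    moreover have "(a, acls v) \<in> absclass clact a (acls v)"
      by (auto simp: mem_absclass_acls intro: alpha_refl)
    moreover have "v \<in> acls v"
      by (simp add: acls_def alpha_refl)
    ultimately show "\<exists>(b, L) \<in> absclass clact a (acls v). \<exists>u \<in> L. alpha (Bind b # u) x"
      by blast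
  qed
  then show ?thesis
    using 3 by (simp add: acls_def)
qed

lemma split_head_alpha:
  assumes "alpha u v"
  shows "split_head u = split_head v"
proof (cases u rule: split_head.cases)
  case 1
  then show ?thesis
    using assms alpha_Nil by simp
next
  case (2 a w)
  then show ?thesis
    using assms alpha_Plain_Cons by (force simp: acls_eq_iff)
next
  case (3 a w)
  then obtain b w' where v: "v = Bind b # w'"
    using assms alpha_Bind_Cons by blast
  then have "alpha (Bind a # w) (Bind d # x) \<longleftrightarrow> alpha (Bind b # w') (Bind d # x)" for d x
    using assms 3 alpha_sym alpha_trans by meson
  then have "absclass clact a (acls w) = absclass clact b (acls w')"
    by (auto simp: mem_absclass_acls)
  then show ?thesis
    using 3 v by simp
qed

lemma bij_betw_iota: "bij_betw iota FC AC"
proof (rule bij_betw_imageI)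
  show "inj_on iota FC"
    unfolding FC_eq_range_split_head
    by (rule inj_onI) (auto simp: iota_split_head acls_eq_iff split_head_alpha)
  show "iota ` FC = AC"
    unfolding FC_eq_range_split_head AC_def by (simp add: image_image iota_split_head)
qed

section \<open>The coalgebra-morphism equation as a fixpoint equation\<close>

definition step_words :: "('q \<times> bar \<times> 'q) set \<Rightarrow> 'q set \<Rightarrow> ('q \<Rightarrow> bar list set set) \<Rightarrow> 'q \<Rightarrow> bar list set" where
  "step_words R Fin tr q =
     {w. (w = [] \<and> q \<in> Fin) \<or> (\<exists>s v q'. w = s # v \<and> (q, s, q') \<in> R \<and> acls v \<in> tr q')}"

lemma coal_cases:
  assumes "c \<in> coal act R Fin q"
  obtains "c = FStar" "q \<in> Fin"
  | a q' where "c = FLit a q'" "(q, Plain a, q') \<in> R"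
  | a q' where "c = FAbs (absclass act a q')" "(q, Bind a, q') \<in> R"
  using assms unfolding coal_def by blast

lemma Fbar_coal_subset_split_head_step_words:
  assumes "rnna act R Fin" and tr_AC: "\<And>q. tr q \<subseteq> AC"
  shows "\<Union>(Fbar clact tr ` coal act R Fin q) \<subseteq> split_head ` step_words R Fin tr q"
proof
  fix e assume "e \<in> \<Union>(Fbar clact tr ` coal act R Fin q)"
  then obtain c where c: "c \<in> coal act R Fin q" "e \<in> Fbar clact tr c"
    by blast
  from c(1) show "e \<in> split_head ` step_words R Fin tr q"
  proof (cases rule: coal_cases)
    case 1
    then have "e = split_head []" "[] \<in> step_words R Fin tr q"
      using c(2) by (auto simp: step_words_def)
    then show ?thesis by blast
  next
    case (2 a q')
    then obtain v where "e = split_head (Plain a # v)" "Plain a # v \<in> step_words R Fin tr q"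
      using c(2) tr_AC unfolding AC_def step_words_def by fastforce
    then show ?thesis by blast
  next
    case (3 a q')
    then obtain b x L where bxL: "e = FAbs (absclass clact b L)" "abs_eq act a q' b x" "L \<in> tr x"
      using c(2) by (auto simp: absclass_def)
    moreover obtain v where "L = acls v"
      using bxL(3) tr_AC unfolding AC_def by blast
    moreover have "(q, Bind b, x) \<in> R"
      using rnna_Bind_abs_eq[OF assms(1) 3(2) bxL(2)] .
    ultimately have "e = split_head (Bind b # v)" "Bind b # v \<in> step_words R Fin tr q"
      by (auto simp: step_words_def)
    then show ?thesis by blast
  qed
qed

lemma split_head_step_words_subset_Fbar_coal:
  assumes "rnna act R Fin"
  shows "split_head ` step_words R Fin tr q \<subseteq> \<Union>(Fbar clact tr ` coal act R Fin q)"
proof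
  fix e assume "e \<in> split_head ` step_words R Fin tr q"
  then obtain w where w: "e = split_head w" "w \<in> step_words R Fin tr q"
    by blast
  show "e \<in> \<Union>(Fbar clact tr ` coal act R Fin q)"
  proof (cases w rule: split_head.cases)
    case 1
    then have "FStar \<in> coal act R Fin q"
      using w(2) by (simp add: step_words_def coal_def)
    then show ?thesis
      using w(1) 1 by force
  next
    case (2 a v)
    then obtain q' where "(q, Plain a, q') \<in> R" "acls v \<in> tr q'"
      using w(2) by (auto simp: step_words_def)
    then have "FLit a q' \<in> coal act R Fin q" "e \<in> Fbar clact tr (FLit a q')"
      using w(1) 2 by (auto simp: coal_def)
    then show ?thesis by blast
  next
    case (3 a v)
    then obtain q' where "(q, Bind a, q') \<in> R" "acls v \<in> tr q'"
      using w(2) by (auto simp: step_words_def)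
    moreover have "(a, q') \<in> absclass act a q'"
      using abs_eq_refl[OF rnna_nominal_set[OF assms(1)]] by (simp add: absclass_def)
    ultimately have "FAbs (absclass act a q') \<in> coal act R Fin q"
      "e \<in> Fbar clact tr (FAbs (absclass act a q'))"
      using w(1) 3 by (auto simp: coal_def)
    then show ?thesis by blast
  qed
qed

lemma Fbar_coal_eq_split_head_step_words:
  assumes "rnna act R Fin" and "\<And>q. tr q \<subseteq> AC"
  shows "\<Union>(Fbar clact tr ` coal act R Fin q) = split_head ` step_words R Fin tr q"
  using Fbar_coal_subset_split_head_step_words[OF assms] split_head_step_words_subset_Fbar_coal[OF assms(1)]
  by (rule equalityI)

lemma image_inv_into_eq_iff:
  assumes "bij_betw f A B" "X \<subseteq> B" "Y \<subseteq> A"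
  shows "inv_into A f ` X = Y \<longleftrightarrow> X = f ` Y"
proof
  show "X = f ` Y" if "inv_into A f ` X = Y"
    using that assms image_inv_into_cancel[of f A B X] by (simp add: bij_betw_def)
  show "inv_into A f ` X = Y" if "X = f ` Y"
    using that assms inv_into_image_cancel[of f A Y] by (simp add: bij_betw_def)
qed

lemma trace_equation_iff_step_fixpoint:
  assumes "rnna act R Fin" and tr_AC: "\<And>q. tr q \<subseteq> AC"
  shows "kcomp (\<lambda>L. {inv_into FC iota L}) tr = kcomp (Fbar clact tr) (coal act R Fin)
    \<longleftrightarrow> (\<forall>q. tr q = acls ` step_words R Fin tr q)"
proof -
  have lhs: "kcomp (\<lambda>L. {inv_into FC iota L}) tr q = inv_into FC iota ` tr q" for q
    by (auto simp: kcomp_def)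
  have rhs: "kcomp (Fbar clact tr) (coal act R Fin) q = split_head ` step_words R Fin tr q" for q
    by (simp add: kcomp_def Fbar_coal_eq_split_head_step_words[OF assms])
  have pointwise: "inv_into FC iota ` tr q = split_head ` step_words R Fin tr q
      \<longleftrightarrow> tr q = acls ` step_words R Fin tr q" for q
  proof -
    have "split_head ` step_words R Fin tr q \<subseteq> FC"
      by (auto simp: FC_eq_range_split_head)
    then have "inv_into FC iota ` tr q = split_head ` step_words R Fin tr q
        \<longleftrightarrow> tr q = iota ` split_head ` step_words R Fin tr q"
      by (rule image_inv_into_eq_iff[OF bij_betw_iota tr_AC])
    also have "iota ` split_head ` step_words R Fin tr q = acls ` step_words R Fin tr q"
      by (simp add: image_image iota_split_head)
    finally show ?thesis .
  qed
  show ?thesis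
    unfolding fun_eq_iff lhs rhs pointwise ..
qed

lemma acls_mem_bar_lang_iff: "acls w \<in> bar_lang R Fin q \<longleftrightarrow> (\<exists>w'. alpha w w' \<and> accepts R Fin q w')"
  unfolding bar_lang_def by (auto simp: acls_eq_iff)

lemma accepted_in_step_words:
  assumes "accepts R Fin q w"
  shows "w \<in> step_words R Fin (bar_lang R Fin) q"
proof (cases w)
  case Nil
  then show ?thesis
    using assms by (simp add: step_words_def)
next
  case (Cons s v)
  then obtain q' where "(q, s, q') \<in> R" "accepts R Fin q' v"
    using assms by auto
  then show ?thesis
    unfolding step_words_def acls_mem_bar_lang_iff using Cons alpha_refl by blast
qed

lemma bar_lang_step_fixpoint: "bar_lang R Fin q = acls ` step_words R Fin (bar_lang R Fin) q"
proof
  show "bar_lang R Fin q \<subseteq> acls ` step_words R Fin (bar_lang R Fin) q"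
  proof
    fix L assume "L \<in> bar_lang R Fin q"
    then obtain w where "L = acls w" "accepts R Fin q w"
      by (auto simp: bar_lang_def)
    then show "L \<in> acls ` step_words R Fin (bar_lang R Fin) q"
      using image_eqI accepted_in_step_words by metis
  qed
  show "acls ` step_words R Fin (bar_lang R Fin) q \<subseteq> bar_lang R Fin q"
  proof
    fix L assume "L \<in> acls ` step_words R Fin (bar_lang R Fin) q"
    then obtain w where w: "L = acls w" "w \<in> step_words R Fin (bar_lang R Fin) q"
      by blast
    then consider "w = []" "q \<in> Fin"
      | s v q' v' where "w = s # v" "(q, s, q') \<in> R" "alpha v v'" "accepts R Fin q' v'"
      unfolding step_words_def acls_mem_bar_lang_iff by blast
    then show "L \<in> bar_lang R Fin q"
    proof cases
      case 1
      then show ?thesis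
        using w(1) unfolding bar_lang_def by fastforce
    next
      case (2 s v q' v')
      then have "alpha w (s # v')" "accepts R Fin q (s # v')"
        using alpha_Cons by auto
      then show ?thesis
        unfolding w(1) acls_mem_bar_lang_iff by blast
    qed
  qed
qed

text \<open>Alpha-equivalence preserves length, so whether \<open>[w]\<close> lies in \<open>acls ` step_words tr q\<close>
  depends on \<open>tr\<close> only through classes of strictly shorter words.\<close>

lemma step_fixpoint_unique:
  assumes fixpoint: "\<And>q. tr q = acls ` step_words R Fin tr q"
    and fixpoint': "\<And>q. tr' q = acls ` step_words R Fin tr' q"
  shows "tr = tr'"
proof -
  have same_classes: "acls w \<in> tr q \<longleftrightarrow> acls w \<in> tr' q" for w q
  proof (induction "length w" arbitrary: w q rule: less_induct)
    case less
    have same_steps: "u \<in> step_words R Fin tr q \<longleftrightarrow> u \<in> step_words R Fin tr' q"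
      if "alpha w u" for u
    proof (cases u)
      case (Cons s v)
      then have "length v < length w"
        using alpha_length[OF that] by simp
      then show ?thesis
        using less Cons by (auto simp: step_words_def)
    qed (simp add: step_words_def)
    have "acls w \<in> tr q \<longleftrightarrow> (\<exists>u \<in> step_words R Fin tr q. alpha w u)"
      by (subst fixpoint) (auto simp: acls_eq_iff)
    also have "\<dots> \<longleftrightarrow> (\<exists>u \<in> step_words R Fin tr' q. alpha w u)"
      using same_steps by blast
    also have "\<dots> \<longleftrightarrow> acls w \<in> tr' q"
      by (subst fixpoint') (auto simp: acls_eq_iff)
    finally show ?case .
  qed
  show ?thesis
  proof (rule ext, rule set_eqI)
    fix q L
    have "L \<in> tr q \<Longrightarrow> L \<in> range acls" "L \<in> tr' q \<Longrightarrow> L \<in> range acls"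
      by (subst (asm) fixpoint fixpoint'; blast)+
    then show "L \<in> tr q \<longleftrightarrow> L \<in> tr' q"
      using same_classes by blast
  qed
qed

theorem theorem3p21:
  fixes act :: "(name \<Rightarrow> name) \<Rightarrow> 'q \<Rightarrow> 'q"
    and R :: "('q \<times> bar \<times> 'q) set"
    and Fin :: "'q set"
  assumes "rnna act R Fin"
  shows "trace_morph act R Fin (bar_lang R Fin)
         \<and> (\<forall>tr. trace_morph act R Fin tr \<longrightarrow> (\<forall>q. tr q = bar_lang R Fin q))"
proof (intro conjI allI impI)
  have bar_lang_AC: "bar_lang R Fin q \<subseteq> AC" for q
    by (auto simp: bar_lang_def AC_def)
  have "\<forall>q. bar_lang R Fin q = acls ` step_words R Fin (bar_lang R Fin) q"
    using bar_lang_step_fixpoint by (rule allI)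
  then have "kcomp (\<lambda>L. {inv_into FC iota L}) (bar_lang R Fin)
      = kcomp (Fbar clact (bar_lang R Fin)) (coal act R Fin)"
    by (rule iffD2[OF trace_equation_iff_step_fixpoint[where tr = "bar_lang R Fin", OF assms bar_lang_AC]])
  then show "trace_morph act R Fin (bar_lang R Fin)"
    unfolding trace_morph_def
    by (simp add: bar_lang_AC finite_supp_bar_lang[OF assms] bar_lang_act[OF assms])
  fix tr q
  assume "trace_morph act R Fin tr"
  then have tr_AC: "\<And>q. tr q \<subseteq> AC"
    and "kcomp (\<lambda>L. {inv_into FC iota L}) tr = kcomp (Fbar clact tr) (coal act R Fin)"
    unfolding trace_morph_def by simp_all
  from this(2) have "\<forall>q. tr q = acls ` step_words R Fin tr q"
    by (rule iffD1[OF trace_equation_iff_step_fixpoint[OF assms tr_AC]])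
  then have "tr = bar_lang R Fin"
    by (intro step_fixpoint_unique[OF _ bar_lang_step_fixpoint]) (rule spec)
  then show "tr q = bar_lang R Fin q"
    by simp
qed

end
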